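(* For every integer $r\ge 1$, $$\sum_{n=1}^{\infty}\frac{n4^n}{(2n-1)^2(4n+2r-1)}\frac{\binom{2n}{n}}{\binom{4n+2r-2}{2n+r-1}}=\sqrt{2}\sum_{k=0}^{r}\frac{(-1)^k}{(2k+1)2^{2r-k-1}}\binom{r}{k}\mathcal{B}(k),$$ where $\mathcal{B}(k)=\int_0^{1/2}\frac{t^k}{\sqrt{1-t}}\,\mathrm{d}t$. *)

theory Defs
  imports "HOL-Analysis.Analysis"
begin

definition calB :: "nat \<Rightarrow> real" where
  "calB k = integral {0..1/2} (\<lambda>t. t ^ k / sqrt (1 - t))"

end

theory Submission
  imports Defs
begin

(* With c_m = (2m choose m) / 4^m, the coefficients of 1/sqrt(1 - x), Wallis' integral
   int_0^1 (1 - s^2)^p ds equals 1/((2p + 1) c_p), and the m-th summand of the series is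
   2/4^r * c_m * W(r + 2m + 1)/(2m + 1) with W(p) that integral.  Integration by parts against the
   antiderivative A_r(s) = int_0^s (1 - u^2)^r du turns W(r + 2m + 1)/(2m + 1) into
   int_0^1 A_r(s) 2s (1 - s^2)^(2m) ds.  All terms are nonnegative, so the sum can be taken under
   the integral; at x = (1 - s^2)^2 the generating function gives 1/(s sqrt(2 - s^2)), hence the
   series equals 2/4^r int_0^1 2 A_r(s)/sqrt(2 - s^2) ds.  Expanding A_r binomially and
   substituting t = s^2/2 turns this into the combination of the integrals B(k). *)

lemma has_integral_of_real_derivative:
  fixes a b :: real
  assumes "a \<le> b" "\<And>x. x \<in> {a..b} \<Longrightarrow> (F has_real_derivative F' x) (at x)"
  shows "(F' has_integral (F b - F a)) {a..b}"
  using assms by (intro fundamental_theorem_of_calculus)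
    (auto simp: has_real_derivative_iff_has_vector_derivative[symmetric] intro: has_field_derivative_at_within)

lemma sums_integral_nonneg_series:
  fixes f :: "nat \<Rightarrow> 'n::euclidean_space \<Rightarrow> real"
  assumes f_int: "\<And>m. (f m has_integral I m) S"
    and f_nonneg: "\<And>m x. x \<in> S \<Longrightarrow> 0 \<le> f m x"
    and f_sums: "\<And>x. x \<in> S \<Longrightarrow> (\<lambda>m. f m x) sums g x"
    and g_int: "g integrable_on S"
  shows "I sums integral S g"
proof -
  define F where "F k x = (\<Sum>m<k. f m x)" for k x
  have F_int: "(F k has_integral (\<Sum>m<k. I m)) S" for k
    unfolding F_def by (intro has_integral_sum f_int finite_lessThan)
  have F_le: "F k x \<le> g x" if "x \<in> S" for k x
    unfolding F_def using f_sums[OF that] f_nonneg[OF that]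
    by (metis sums_iff sum_le_suminf finite_lessThan)
  have "(\<lambda>k. integral S (F k)) \<longlonglongrightarrow> integral S g"
  proof (rule monotone_convergence_increasing[THEN conjunct2])
    show "F k integrable_on S" for k
      using F_int by blast
    show "F k x \<le> F (Suc k) x" if "x \<in> S" for k x
      unfolding F_def using f_nonneg[OF that] by simp
    show "(\<lambda>k. F k x) \<longlonglongrightarrow> g x" if "x \<in> S" for x
      using f_sums[OF that] by (simp add: F_def sums_def)
    have "\<bar>integral S (F k)\<bar> \<le> integral S g" for k
    proof -
      have "0 \<le> integral S (F k)"
        using F_int f_nonneg by (intro integral_nonneg) (auto simp: F_def intro: sum_nonneg)
      moreover have "integral S (F k) \<le> integral S g"
        using F_int g_int F_le by (intro integral_le) auto
      ultimately show ?thesis by simp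
    qed
    then show "bounded (range (\<lambda>k. integral S (F k)))"
      unfolding bounded_real by blast
  qed
  moreover have "integral S (F k) = (\<Sum>m<k. I m)" for k
    using F_int by (rule integral_unique)
  ultimately show ?thesis
    by (simp add: sums_def)
qed

definition inv_sqrt_coeff :: "nat \<Rightarrow> real" where
  "inv_sqrt_coeff m = real ((2*m) choose m) / 4^m"

lemma inv_sqrt_coeff_pos: "0 < inv_sqrt_coeff m"
  by (simp add: inv_sqrt_coeff_def)

lemma central_binomial_Suc:
  "Suc m * ((2 * Suc m) choose Suc m) = 2 * (2*m + 1) * ((2*m) choose m)"
proof -
  have "Suc m * ((2 * Suc m) choose Suc m) = 2 * Suc m * (Suc (2*m) choose m)"
    using Suc_times_binomial[of m "Suc (2*m)"] by (simp del: binomial_Suc_Suc)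
  also have "Suc (2*m) choose m = Suc (2*m) choose Suc m"
    using binomial_symmetric[of m "Suc (2*m)"] by (simp add: Suc_diff_le)
  also have "2 * Suc m * (Suc (2*m) choose Suc m) = 2 * (Suc m * (Suc (2*m) choose Suc m))"
    by (simp only: mult.assoc)
  also have "Suc m * (Suc (2*m) choose Suc m) = Suc (2*m) * ((2*m) choose m)"
    by (rule Suc_times_binomial)
  finally show ?thesis by simp
qed

lemma inv_sqrt_coeff_Suc:
  "inv_sqrt_coeff (Suc m) = inv_sqrt_coeff m * (2 * real m + 1) / (2 * real m + 2)"
proof -
  have central: "real ((2 * Suc m) choose Suc m) = 2 * (2 * real m + 1) * real ((2*m) choose m) / (real m + 1)"
    using arg_cong[OF central_binomial_Suc[of m], of real]
    by (simp add: eq_divide_eq algebra_simps del: binomial_Suc_Suc)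
  show ?thesis
    unfolding inv_sqrt_coeff_def central by (simp add: divide_simps) (simp add: algebra_simps)
qed

lemma inv_sqrt_coeff_eq_gbinomial: "inv_sqrt_coeff m = (-1)^m * ((-1/2) gchoose m)"
proof (induction m)
  case 0
  then show ?case by (simp add: inv_sqrt_coeff_def)
next
  case (Suc m)
  have "(real m + 1) * ((-1/2) gchoose Suc m) = (-1/2 - real m) * ((-1/2) gchoose m)"
    using gbinomial_mult_1[of "-1/2 :: real" m] by (simp add: algebra_simps)
  then have "((-1/2) gchoose Suc m) = - ((-1/2) gchoose m) * ((2 * real m + 1) / (2 * real m + 2))"
    by (simp add: field_simps)
  then show ?case
    by (simp add: inv_sqrt_coeff_Suc Suc.IH)
qed

lemma sums_inv_sqrt_coeff:
  fixes x :: real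
  assumes "\<bar>x\<bar> < 1"
  shows "(\<lambda>m. inv_sqrt_coeff m * x^m) sums (1 / sqrt (1 - x))"
proof -
  have "(\<lambda>m. ((-1/2) gchoose m) * (-x)^m) sums (1 + -x) powr (-1/2)"
    using gen_binomial_real[of "-x" "-1/2"] assms by simp
  moreover have "((-1/2) gchoose m) * (-x)^m = inv_sqrt_coeff m * x^m" for m
    by (simp add: inv_sqrt_coeff_eq_gbinomial power_minus')
  moreover have "(1 + -x) powr (-1/2) = 1 / sqrt (1 - x)"
    using assms by (simp add: powr_minus_divide powr_half_sqrt)
  ultimately show ?thesis by simp
qed

definition wallis_integral :: "nat \<Rightarrow> real" where
  "wallis_integral p = 1 / ((2 * real p + 1) * inv_sqrt_coeff p)"

lemma has_integral_one_minus_sq_power: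
  "((\<lambda>s. (1 - s^2)^p) has_integral wallis_integral p) {0..1::real}"
  unfolding wallis_integral_def
proof (induction p)
  case 0
  then show ?case using has_integral_const_real[of "1::real" 0 1] by (simp add: inv_sqrt_coeff_def)
next
  case (Suc p)
  have "((\<lambda>s. (2 * real p + 3) * (1 - s^2)^Suc p - (2 * real p + 2) * (1 - s^2)^p) has_integral
          (\<lambda>s. s * (1 - s^2)^Suc p) 1 - (\<lambda>s. s * (1 - s^2)^Suc p) 0) {0..1::real}"
  proof (rule has_integral_of_real_derivative)
    fix x :: real
    show "((\<lambda>s. s * (1 - s^2)^Suc p) has_real_derivative
            (2 * real p + 3) * (1 - x^2)^Suc p - (2 * real p + 2) * (1 - x^2)^p) (at x)"
      by (rule derivative_eq_intros refl | simp)+ (simp add: algebra_simps power2_eq_square)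
  qed simp
  then have "((\<lambda>s. (2 * real p + 3) * (1 - s^2)^Suc p - (2 * real p + 2) * (1 - s^2)^p) has_integral 0) {0..1::real}"
    by simp
  from has_integral_add[OF this has_integral_mult_right[OF Suc.IH, of "2 * real p + 2"]]
  have "((\<lambda>s. (2 * real p + 3) * (1 - s^2)^Suc p) has_integral
          (2 * real p + 2) / ((2 * real p + 1) * inv_sqrt_coeff p)) {0..1::real}"
    by simp
  from has_integral_mult_right[OF this, of "1 / (2 * real p + 3)"]
  have "((\<lambda>s. (1 - s^2)^Suc p) has_integral
          1 / (2 * real p + 3) * ((2 * real p + 2) / ((2 * real p + 1) * inv_sqrt_coeff p))) {0..1::real}"
    by (simp del: power_Suc)
  also have "1 / (2 * real p + 3) * ((2 * real p + 2) / ((2 * real p + 1) * inv_sqrt_coeff p)) =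
             1 / ((2 * real (Suc p) + 1) * inv_sqrt_coeff (Suc p))"
    using inv_sqrt_coeff_pos[of p] by (simp add: inv_sqrt_coeff_Suc field_simps)
  finally show ?case .
qed

definition antideriv_one_minus_sq_pow :: "nat \<Rightarrow> real \<Rightarrow> real" where
  "antideriv_one_minus_sq_pow r s = (\<Sum>k\<le>r. (-1)^k * real (r choose k) * s^(2*k+1) / (2 * real k + 1))"

lemma antideriv_one_minus_sq_pow_0 [simp]: "antideriv_one_minus_sq_pow r 0 = 0"
  by (simp add: antideriv_one_minus_sq_pow_def)

lemma has_real_derivative_antideriv_one_minus_sq_pow:
  "(antideriv_one_minus_sq_pow r has_real_derivative (1 - s^2)^r) (at s)"
proof -
  have "(antideriv_one_minus_sq_pow r has_real_derivative
          (\<Sum>k\<le>r. (-1)^k * real (r choose k) * ((2 * real k + 1) * s^(2*k)) / (2 * real k + 1))) (at s)"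
    unfolding antideriv_one_minus_sq_pow_def
    by (intro DERIV_sum DERIV_cdivide DERIV_cmult) (use DERIV_pow[of "2*k+1" s for k] in \<open>simp add: add.commute\<close>)
  also have "(\<Sum>k\<le>r. (-1)^k * real (r choose k) * ((2 * real k + 1) * s^(2*k)) / (2 * real k + 1)) =
             (\<Sum>k\<le>r. real (r choose k) * (-(s^2))^k * 1^(r-k))"
    by (intro sum.cong refl) (simp add: power_minus' power_mult)
  also have "\<dots> = (1 - s^2)^r"
    using binomial_ring[of "-(s^2)" 1 r] by simp
  finally show ?thesis .
qed

lemma antideriv_one_minus_sq_pow_nonneg:
  assumes "0 \<le> s" "s \<le> 1"
  shows "0 \<le> antideriv_one_minus_sq_pow r s"
proof -
  have "antideriv_one_minus_sq_pow r 0 \<le> antideriv_one_minus_sq_pow r s"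
  proof (rule DERIV_nonneg_imp_nondecreasing[OF assms(1)])
    fix x assume "0 \<le> x" "x \<le> s"
    with assms have "0 \<le> (1 - x^2)^r"
      by (simp add: abs_square_le_1)
    then show "\<exists>y. (antideriv_one_minus_sq_pow r has_real_derivative y) (at x) \<and> 0 \<le> y"
      using has_real_derivative_antideriv_one_minus_sq_pow by blast
  qed
  then show ?thesis by simp
qed

lemma continuous_on_antideriv_one_minus_sq_pow: "continuous_on A (antideriv_one_minus_sq_pow r)"
  using DERIV_isCont[OF has_real_derivative_antideriv_one_minus_sq_pow]
  by (simp add: continuous_at_imp_continuous_on)

lemma has_integral_antideriv_one_minus_sq_pow_weighted:
  "((\<lambda>s. antideriv_one_minus_sq_pow r s * (2 * s) * (1 - s^2)^q) has_integral
      wallis_integral (r + q + 1) / (real q + 1)) {0..1}"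
proof -
  let ?A = "antideriv_one_minus_sq_pow r"
  have "((\<lambda>s. (1 - s^2)^(r + q + 1) - (real q + 1) * (?A s * (2 * s) * (1 - s^2)^q)) has_integral
          (\<lambda>s. ?A s * (1 - s^2)^Suc q) 1 - (\<lambda>s. ?A s * (1 - s^2)^Suc q) 0) {0..1}"
  proof (rule has_integral_of_real_derivative)
    fix x :: real
    show "((\<lambda>s. ?A s * (1 - s^2)^Suc q) has_real_derivative
            (1 - x^2)^(r + q + 1) - (real q + 1) * (?A x * (2 * x) * (1 - x^2)^q)) (at x)"
      by (rule derivative_eq_intros has_real_derivative_antideriv_one_minus_sq_pow refl | simp)+
         (simp add: algebra_simps power_add)
  qed simp
  then have "((\<lambda>s. (1 - s^2)^(r + q + 1) - (real q + 1) * (?A s * (2 * s) * (1 - s^2)^q)) has_integral 0) {0..1}"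
    by simp
  from has_integral_diff[OF has_integral_one_minus_sq_power[of "r + q + 1"] this]
  have "((\<lambda>s. (real q + 1) * (?A s * (2 * s) * (1 - s^2)^q)) has_integral wallis_integral (r + q + 1)) {0..1}"
    by simp
  from has_integral_mult_right[OF this, of "1 / (real q + 1)"]
  show ?thesis
    by (simp add: add_pos_nonneg)
qed

lemma sums_inv_sqrt_coeff_one_minus_sq:
  fixes s :: real
  assumes "0 < s" "s \<le> 1"
  shows "(\<lambda>m. inv_sqrt_coeff m * (1 - s^2)^(2*m)) sums (1 / (s * sqrt (2 - s^2)))"
proof -
  have "0 \<le> 1 - s^2" "1 - s^2 < 1"
    using assms by (auto simp: power_le_one)
  then have "\<bar>(1 - s^2)^2\<bar> < 1"
    by (simp add: power_less_one_iff)
  from sums_inv_sqrt_coeff[OF this]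
  have "(\<lambda>m. inv_sqrt_coeff m * (1 - s^2)^(2*m)) sums (1 / sqrt (1 - (1 - s^2)^2))"
    by (simp add: power_mult)
  also have "1 - (1 - s^2)^2 = s^2 * (2 - s^2)"
    by (simp add: power2_eq_square algebra_simps)
  also have "sqrt (s^2 * (2 - s^2)) = s * sqrt (2 - s^2)"
    using assms by (simp add: real_sqrt_mult)
  finally show ?thesis .
qed

lemma sums_inv_sqrt_coeff_wallis_integral:
  "(\<lambda>m. inv_sqrt_coeff m * (wallis_integral (r + 2*m + 1) / (2 * real m + 1))) sums
     integral {0..1} (\<lambda>s. 2 * antideriv_one_minus_sq_pow r s / sqrt (2 - s^2))"
proof -
  let ?A = "antideriv_one_minus_sq_pow r"
  let ?f = "\<lambda>m s. inv_sqrt_coeff m * (?A s * (2 * s) * (1 - s^2)^(2*m))"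
  have integral: "(?f m has_integral inv_sqrt_coeff m * (wallis_integral (r + 2*m + 1) / (2 * real m + 1))) {0..1}"
    for m
    using has_integral_antideriv_one_minus_sq_pow_weighted[of r "2*m"]
    by (intro has_integral_mult_right) simp
  have nonneg: "0 \<le> ?f m s" if "s \<in> {0..1}" for m s
    using that inv_sqrt_coeff_pos[of m] antideriv_one_minus_sq_pow_nonneg[of s r]
    by (simp add: power_le_one)
  have sums: "(\<lambda>m. ?f m s) sums (2 * ?A s / sqrt (2 - s^2))" if "s \<in> {0..1}" for s
  proof (cases "s = 0")
    case False
    with that have "0 < s" "s \<le> 1" by auto
    from sums_mult[OF sums_inv_sqrt_coeff_one_minus_sq[OF this], of "?A s * (2 * s)"]
    show ?thesis
      using \<open>0 < s\<close> by (simp add: ac_simps)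
  qed simp
  have "s^2 \<noteq> 2" if "s \<in> {0..1::real}" for s
    using that power_le_one[of s 2] by simp
  then have "(\<lambda>s. 2 * ?A s / sqrt (2 - s^2)) integrable_on {0..1}"
    by (intro integrable_continuous_interval continuous_intros continuous_on_antideriv_one_minus_sq_pow) auto
  from sums_integral_nonneg_series[OF integral nonneg sums this]
  show ?thesis .
qed

lemma has_integral_odd_power_div_sqrt:
  "((\<lambda>s. s^(2*k+1) / sqrt (2 - s^2)) has_integral 2^k / sqrt 2 * calB k) {0..1}"
proof -
  have "((\<lambda>s. s *\<^sub>R ((s^2/2)^k / sqrt (1 - s^2/2))) has_integral
          integral {0^2/2..1^2/2} (\<lambda>t. t^k / sqrt (1 - t))) {0..1::real}"
  proof (rule has_integral_substitution[where c = 0 and d = "1/2"])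
    show "(\<lambda>s::real. s^2/2) ` {0..1} \<subseteq> {0..1/2}"
      by (auto simp: power_le_one)
    show "continuous_on {0..1/2} (\<lambda>t::real. t^k / sqrt (1 - t))"
      by (intro continuous_intros) auto
    show "((\<lambda>s::real. s^2/2) has_real_derivative s) (at s within {0..1})" for s
      by (auto intro!: derivative_eq_intros)
  qed auto
  moreover have "s *\<^sub>R ((s^2/2)^k / sqrt (1 - s^2/2)) = sqrt 2 / 2^k * (s^(2*k+1) / sqrt (2 - s^2))" for s :: real
  proof -
    have "sqrt (1 - s^2/2) = sqrt (2 - s^2) / sqrt 2"
      by (simp add: real_sqrt_divide[symmetric] diff_divide_distrib)
    then show ?thesis
      by (simp add: power_divide power_mult)
  qed
  ultimately have "((\<lambda>s. sqrt 2 / 2^k * (s^(2*k+1) / sqrt (2 - s^2))) has_integral calB k) {0..1}"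
    by (simp add: calB_def)
  from has_integral_mult_right[OF this, of "2^k / sqrt 2"]
  show ?thesis
    by simp
qed

lemma sum_calB_eq_integral_antideriv:
  assumes "r \<ge> 1"
  shows "sqrt 2 * (\<Sum>k = 0..r. (-1)^k / ((2 * real k + 1) * 2^(2*r - k - 1)) * real (r choose k) * calB k) =
         2 / 4^r * integral {0..1} (\<lambda>s. 2 * antideriv_one_minus_sq_pow r s / sqrt (2 - s^2))"
proof -
  define c where "c k = 2 * (-1)^k * real (r choose k) / (2 * real k + 1)" for k
  have "((\<lambda>s. \<Sum>k\<le>r. c k * (s^(2*k+1) / sqrt (2 - s^2))) has_integral
          (\<Sum>k\<le>r. c k * (2^k / sqrt 2 * calB k))) {0..1}"
    by (intro has_integral_sum finite_atMost has_integral_mult_right has_integral_odd_power_div_sqrt)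
  moreover have "(\<Sum>k\<le>r. c k * (s^(2*k+1) / sqrt (2 - s^2))) =
                 2 * antideriv_one_minus_sq_pow r s / sqrt (2 - s^2)" for s :: real
    by (simp add: c_def antideriv_one_minus_sq_pow_def sum_distrib_left sum_divide_distrib mult.assoc)
  ultimately have "integral {0..1} (\<lambda>s. 2 * antideriv_one_minus_sq_pow r s / sqrt (2 - s^2)) =
                   (\<Sum>k\<le>r. c k * (2^k / sqrt 2 * calB k))"
    by (simp add: integral_unique)
  moreover have "2 / 4^r * (c k * (2^k / sqrt 2 * calB k)) =
                 sqrt 2 * ((-1)^k / ((2 * real k + 1) * 2^(2*r - k - 1)) * real (r choose k) * calB k)"
    if "k \<le> r" for k
  proof -
    define P where "P = (2::real)^(2*r - k - 1)"
    have "(4::real)^r = 2^(2*r)"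
      by (simp add: power_mult)
    also have "2 * r = Suc (k + (2*r - k - 1))"
      using that assms by simp  (* the truncated exponent 2r - k - 1 is exact only for r \<ge> 1 *)
    finally have four: "(4::real)^r = 2 * 2^k * P"
      unfolding P_def by (simp only: power_Suc power_add mult.assoc)
    have sqrt2: "(2::real)^k / sqrt 2 = sqrt 2 * 2^k / 2"
      by (simp add: real_div_sqrt field_simps)
    have "2 * real k + 1 \<noteq> 0"
      by simp
    then show ?thesis
      unfolding four sqrt2 P_def[symmetric] c_def by (simp add: field_simps)
  qed
  ultimately show ?thesis
    by (simp add: sum_distrib_left atLeast0AtMost)
qed

lemma summand_eq_wallis_integral:
  fixes m r :: nat
  shows "real (m+1) * 4^(m+1) / ((2 * real (m+1) - 1)^2 * (4 * real (m+1) + 2 * real r - 1))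
           * (real (2*(m+1) choose (m+1)) / real ((4*(m+1) + 2*r - 2) choose (2*(m+1) + r - 1)))
         = 2 / 4^r * (inv_sqrt_coeff m * (wallis_integral (r + 2*m + 1) / (2 * real m + 1)))"
  (is "?lhs = ?rhs")
proof -
  define p where "p = r + 2*m + 1"
  have index: "4*(m+1) + 2*r - 2 = 2*p" "2*(m+1) + r - 1 = p"
    by (simp_all add: p_def)
  have central: "real ((2*k) choose k) = 4^k * inv_sqrt_coeff k" for k
    by (simp add: inv_sqrt_coeff_def)
  have factors: "2 * real (m+1) - 1 = 2 * real m + 1" "4 * real (m+1) + 2 * real r - 1 = 2 * real p + 1"
    by (simp_all add: p_def)
  have coeff: "real (m+1) * inv_sqrt_coeff (m+1) = inv_sqrt_coeff m * (2 * real m + 1) / 2"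
    by (simp add: inv_sqrt_coeff_Suc field_simps)
  have "(4::real)^(m+1) * 4^(m+1) * 4^r = 4^((m+1) + (m+1) + r)"
    by (simp only: power_add)
  also have "(m+1) + (m+1) + r = Suc p"
    by (simp add: p_def)
  finally have powers: "4^(m+1) * 4^(m+1) / 4^p = 4 / (4::real)^r"
    by (simp add: field_simps)
  have "?lhs = (real (m+1) * inv_sqrt_coeff (m+1)) * (4^(m+1) * 4^(m+1) / 4^p)
                 / ((2 * real m + 1)^2 * (2 * real p + 1) * inv_sqrt_coeff p)"
    unfolding index central factors using inv_sqrt_coeff_pos[of p] by (simp add: field_simps)
  also have "\<dots> = inv_sqrt_coeff m * (2 * real m + 1) / 2 * (4 / 4^r)
                 / ((2 * real m + 1)^2 * (2 * real p + 1) * inv_sqrt_coeff p)"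
    by (simp only: coeff powers)
  also have "\<dots> = ?rhs"
  proof -
    have cancel: "a * U / 2 * (4 / Z) / (U^2 * V * c) = 2 / Z * (a * (1 / (V * c)) / U)"
      if "U \<noteq> 0" "V \<noteq> 0" "c \<noteq> 0" "Z \<noteq> 0" for a U V c Z :: real
      using that by (simp add: field_simps power2_eq_square)
    have "inv_sqrt_coeff p \<noteq> 0"
      using inv_sqrt_coeff_pos[of p] by simp
    from cancel[where U = "2 * real m + 1" and V = "2 * real p + 1" and c = "inv_sqrt_coeff p"
            and Z = "4^r" and a = "inv_sqrt_coeff m", OF _ _ this]
    show ?thesis
      unfolding p_def[symmetric] wallis_integral_def by simp
  qed
  finally show ?thesis .
qed

theorem theorem3p0p4:
  fixes r :: nat
  assumes "r \<ge> 1"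
  shows "(\<lambda>m. let n = m + 1 in
            (real n * 4 ^ n / ((2 * real n - 1)^2 * (4 * real n + 2 * real r - 1)))
            * (real (2*n choose n) / real ((4*n + 2*r - 2) choose (2*n + r - 1))))
         sums (sqrt 2 * (\<Sum>k = 0..r. (-1) ^ k / ((2 * real k + 1) * 2 ^ (2*r - k - 1))
                         * real (r choose k) * calB k))"
  using sums_mult[OF sums_inv_sqrt_coeff_wallis_integral, of "2 / 4^r" r]
  unfolding Let_def summand_eq_wallis_integral sum_calB_eq_integral_antideriv[OF assms] .

end
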